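(* In the weighted kidney exchange game (W-KEG), even assuming players cannot hide vertices, a player can have a strict incentive to misreport her weights: there exists a W-KEG instance in which some player $p$ strictly increases her true utility by reporting a different (larger) weight $w^p_{vu}$ for some external edge $(v,u)$ with $v\in V^p$, the independent agent then computing its maximum-weight matching with the reported weights.
   Context: W-KEG: players $N=\{1,\dots,n\}$; player $p$ has internal graph $G^p=(V^p,E^p)$ (pairwise disjoint vertex sets); $E^I$ is a set of external edges each joining vertices of two different players; $E^I_p$ is the set of external edges incident to $V^p$. Each player $p$ has nonnegative weights $w^p_e$ on $E^p\cup E^I_p$. A strategy of player $p$ is a matching $M^p$ of $G^p$. The independent agent selects a maximum-weight matching $M^I$ of the external edges whose endpoints are uncovered by $\bigcup_pM^p$, where an external edge $(v,u)$ with $v\in V^i$, $u\in V^j$ has weight $w^I_{vu}=w^i_{vu}+w^j_{vu}$ computed from the players' reported weights. With $M^I_p$ the edges of $M^I$ incident to $V^p$, player $p$'s (true) utility is $\sum_{e\in M^p}w^p_e+\sum_{e\in M^I_p}w^p_e$ with her true weights. *)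

theory Defs
  imports Complex_Main
begin

text \<open>Vertices are natural numbers, edges are
  two-element vertex sets.  Players are 1..n; player p owns vertex set V p, internal edge set
  E p; EI is the set of external edges; w p e is player p's (true or reported) weight of e.\<close>

definition matching :: "'v set set \<Rightarrow> bool" where
  "matching M \<longleftrightarrow> (\<forall>e\<in>M. \<forall>f\<in>M. e \<noteq> f \<longrightarrow> e \<inter> f = {})"

definition ext_edges_of :: "(nat \<Rightarrow> 'v set) \<Rightarrow> 'v set set \<Rightarrow> nat \<Rightarrow> 'v set set" where
  "ext_edges_of V EI p = {e \<in> EI. e \<inter> V p \<noteq> {}}"

definition wkeg :: "nat \<Rightarrow> (nat \<Rightarrow> 'v set) \<Rightarrow> (nat \<Rightarrow> 'v set set) \<Rightarrow> 'v set set
    \<Rightarrow> (nat \<Rightarrow> 'v set \<Rightarrow> real) \<Rightarrow> bool" where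
  "wkeg n V E EI w \<longleftrightarrow>
     (\<forall>p\<in>{1..n}. finite (V p)) \<and>
     (\<forall>p\<in>{1..n}. \<forall>q\<in>{1..n}. p \<noteq> q \<longrightarrow> V p \<inter> V q = {}) \<and>
     (\<forall>p\<in>{1..n}. \<forall>e\<in>E p. \<exists>a b. e = {a, b} \<and> a \<noteq> b \<and> a \<in> V p \<and> b \<in> V p) \<and>
     finite EI \<and>
     (\<forall>e\<in>EI. \<exists>a b i j. e = {a, b} \<and> i \<in> {1..n} \<and> j \<in> {1..n} \<and> i \<noteq> j
                          \<and> a \<in> V i \<and> b \<in> V j) \<and>
     (\<forall>p\<in>{1..n}. \<forall>e\<in>E p \<union> ext_edges_of V EI p. 0 \<le> w p e)"

definition strategy_profile :: "nat \<Rightarrow> (nat \<Rightarrow> 'v set set) \<Rightarrow> (nat \<Rightarrow> 'v set set) \<Rightarrow> bool" where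
  "strategy_profile n E M \<longleftrightarrow> (\<forall>p\<in>{1..n}. M p \<subseteq> E p \<and> matching (M p))"

definition available :: "nat \<Rightarrow> 'v set set \<Rightarrow> (nat \<Rightarrow> 'v set set) \<Rightarrow> 'v set set" where
  "available n EI M = {e \<in> EI. \<forall>p\<in>{1..n}. e \<inter> \<Union>(M p) = {}}"

text \<open>Weight used by the independent agent: w^I_{vu} = w^i_{vu} + w^j_{vu}.\<close>
definition agent_weight :: "nat \<Rightarrow> (nat \<Rightarrow> 'v set) \<Rightarrow> (nat \<Rightarrow> 'v set \<Rightarrow> real) \<Rightarrow> 'v set \<Rightarrow> real" where
  "agent_weight n V w e = (\<Sum>p\<in>{1..n}. if e \<inter> V p \<noteq> {} then w p e else 0)"

definition agent_choice :: "nat \<Rightarrow> (nat \<Rightarrow> 'v set) \<Rightarrow> 'v set set \<Rightarrow> (nat \<Rightarrow> 'v set set)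
    \<Rightarrow> (nat \<Rightarrow> 'v set \<Rightarrow> real) \<Rightarrow> 'v set set \<Rightarrow> bool" where
  "agent_choice n V EI M w MI \<longleftrightarrow>
     MI \<subseteq> available n EI M \<and> matching MI \<and>
     (\<forall>M'. M' \<subseteq> available n EI M \<and> matching M' \<longrightarrow>
        (\<Sum>e\<in>M'. agent_weight n V w e) \<le> (\<Sum>e\<in>MI. agent_weight n V w e))"

text \<open>Utility of player p (computed with weights w, meant to be her true weights).\<close>
definition utility :: "(nat \<Rightarrow> 'v set) \<Rightarrow> (nat \<Rightarrow> 'v set \<Rightarrow> real) \<Rightarrow> nat
    \<Rightarrow> (nat \<Rightarrow> 'v set set) \<Rightarrow> 'v set set \<Rightarrow> real" where
  "utility V w p M MI = (\<Sum>e\<in>M p. w p e) + (\<Sum>e\<in>{e\<in>MI. e \<inter> V p \<noteq> {}}. w p e)"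

end

theory Submission
  imports Defs
begin

text \<open>Player 1 owns a single vertex 1, joined by external edges to the vertices 2 and 3 of
  player 2.  Player 1 values only the edge {1,2} (weight 1), player 2 values only {1,3}
  (weight 2).  The two edges share vertex 1, so the agent matches exactly one of them, the
  heavier one: truthfully {1,3}, which gives player 1 nothing.  Reporting weight 3 on {1,2}
  makes {1,2} the heavier edge, and player 1 then collects her true weight 1.\<close>

lemma matching_singleton: "matching {e}"
  unfolding matching_def by simp

lemma not_matching_crossing_pair:
  assumes "e \<noteq> f" "e \<inter> f \<noteq> {}"
  shows "\<not> matching {e, f}"
  using assms unfolding matching_def by blast

lemma agent_weight_eq_sum_owners:
  "agent_weight n V w e = (\<Sum>p\<in>{p\<in>{1..n}. e \<inter> V p \<noteq> {}}. w p e)"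
  unfolding agent_weight_def by (simp add: sum.inter_filter[symmetric])

lemma agent_weight_two_owners:
  assumes "{p\<in>{1..n}. e \<inter> V p \<noteq> {}} = {i, j}" "i \<noteq> j"
  shows "agent_weight n V w e = w i e + w j e"
  using assms by (simp add: agent_weight_eq_sum_owners)

lemma subset_doubleton_cases:
  assumes "A \<subseteq> {a, b}"
  obtains "A = {}" | "A = {a}" | "A = {b}" | "A = {a, b}"
  using assms by blast

lemma agent_choice_crossing_pair:
  assumes avail: "available n EI M = {e, f}"
    and "e \<noteq> f" "e \<inter> f \<noteq> {}"
    and heavier: "agent_weight n V w f < agent_weight n V w e"
    and nonneg: "0 \<le> agent_weight n V w f"
    and choice: "agent_choice n V EI M w MI"
  shows "MI = {e}"
proof -
  have "MI \<subseteq> {e, f}" "matching MI"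
    using choice avail unfolding agent_choice_def by simp_all
  have "{e} \<subseteq> available n EI M"
    using avail by simp
  with choice matching_singleton[of e]
  have "(\<Sum>g\<in>{e}. agent_weight n V w g) \<le> (\<Sum>g\<in>MI. agent_weight n V w g)"
    unfolding agent_choice_def by blast
  then have bound: "agent_weight n V w e \<le> (\<Sum>g\<in>MI. agent_weight n V w g)"
    by simp
  from \<open>MI \<subseteq> {e, f}\<close> show "MI = {e}"
  proof (cases rule: subset_doubleton_cases)
    case 1
    with bound heavier nonneg show ?thesis
      by simp
  next
    case 2
    then show ?thesis .
  next
    case 3
    with bound heavier show ?thesis
      by simp
  next
    case 4
    with \<open>matching MI\<close> not_matching_crossing_pair[OF \<open>e \<noteq> f\<close> \<open>e \<inter> f \<noteq> {}\<close>]
    show ?thesis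
      by simp
  qed
qed

lemma utility_empty_profile_singleton:
  "utility V w p (\<lambda>_. {}) {e} = (if e \<inter> V p \<noteq> {} then w p e else 0)"
proof -
  have "{g\<in>{e}. g \<inter> V p \<noteq> {}} = (if e \<inter> V p \<noteq> {} then {e} else {})"
    by auto
  then show ?thesis
    unfolding utility_def by simp
qed

definition example_V :: "nat \<Rightarrow> nat set" where
  "example_V p = (if p = 1 then {1} else if p = 2 then {2, 3} else {})"

definition example_EI :: "nat set set" where
  "example_EI = {{1, 2}, {1, 3}}"

definition example_w :: "nat \<Rightarrow> nat set \<Rightarrow> real" where
  "example_w p e = (if p = 1 \<and> e = {1, 2} then 1 else if p = 2 \<and> e = {1, 3} then 2 else 0)"

lemma example_edges_distinct: "{1::nat, 2} \<noteq> {1, 3}"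
  by (auto simp: doubleton_eq_iff)

lemma example_external_edge:
  assumes "b \<in> example_V 2"
  shows "\<exists>a' b' i j. {1, b} = {a', b'} \<and> i \<in> {1..2} \<and> j \<in> {1..2} \<and> i \<noteq> j
           \<and> a' \<in> example_V i \<and> b' \<in> example_V j"
proof (intro exI conjI)
  show "{1, b} = {1, b}" "(1::nat) \<in> {1..2}" "(2::nat) \<in> {1..2}" "(1::nat) \<noteq> 2"
    by simp_all
  show "1 \<in> example_V 1" "b \<in> example_V 2"
    using assms by (simp_all add: example_V_def)
qed

lemma example_wkeg: "wkeg 2 example_V (\<lambda>_. {}) example_EI example_w"
proof -
  have players: "{1..2::nat} = {1, 2}"
    by auto
  have "\<forall>e\<in>example_EI. \<exists>a b i j. e = {a, b} \<and> i \<in> {1..2} \<and> j \<in> {1..2} \<and> i \<noteq> j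
                                  \<and> a \<in> example_V i \<and> b \<in> example_V j"
    using example_external_edge[of 2] example_external_edge[of 3]
    by (simp add: example_EI_def example_V_def)
  moreover have "\<forall>p\<in>{1..2}. \<forall>q\<in>{1..2}. p \<noteq> q \<longrightarrow> example_V p \<inter> example_V q = {}"
    unfolding players by (simp add: example_V_def)
  moreover have "0 \<le> example_w p e" for p e
    by (simp add: example_w_def)
  ultimately show ?thesis
    unfolding wkeg_def by (simp add: example_V_def example_EI_def)
qed

lemma example_owners:
  "{p\<in>{1..2}. {1, 2} \<inter> example_V p \<noteq> {}} = {1, 2}"
  "{p\<in>{1..2}. {1, 3} \<inter> example_V p \<noteq> {}} = {1, 2}"
  by (auto simp: example_V_def)

lemma example_available: "available 2 example_EI (\<lambda>_. {}) = {{1, 2}, {1, 3}}"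
  unfolding available_def example_EI_def by auto

theorem lemma3:
  shows "\<exists>(n::nat) (V::nat \<Rightarrow> nat set) E EI (w::nat \<Rightarrow> nat set \<Rightarrow> real) M p v u x.
           wkeg n V E EI w \<and> strategy_profile n E M \<and> p \<in> {1..n} \<and>
           {v, u} \<in> EI \<and> v \<in> V p \<and> x > w p {v, u} \<and>
           (\<forall>MI MI'. agent_choice n V EI M w MI \<longrightarrow>
                     agent_choice n V EI M (w(p := (w p)({v, u} := x))) MI' \<longrightarrow>
                     utility V w p M MI < utility V w p M MI')"
proof (intro exI conjI allI impI)
  let ?lie = "example_w(1 := (example_w 1)({1, 2} := 3))"
  show "wkeg 2 example_V (\<lambda>_. {}) example_EI example_w"
    by (rule example_wkeg)
  show "strategy_profile 2 (\<lambda>_. {}) (\<lambda>_. {})"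
    unfolding strategy_profile_def matching_def by simp
  show "(1::nat) \<in> {1..2}" "{1::nat, 2} \<in> example_EI" "(1::nat) \<in> example_V 1"
    by (simp_all add: example_EI_def example_V_def)
  show "example_w 1 {1, 2} < 3"
    by (simp add: example_w_def)
  fix MI MI'
  assume truthful: "agent_choice 2 example_V example_EI (\<lambda>_. {}) example_w MI"
    and misreported: "agent_choice 2 example_V example_EI (\<lambda>_. {}) ?lie MI'"
  have "(1::nat) \<noteq> 2"
    by simp
  note owners = example_owners[THEN agent_weight_two_owners, OF this]
  have weights:
    "agent_weight 2 example_V example_w {1, 2} = 1" "agent_weight 2 example_V example_w {1, 3} = 2"
    "agent_weight 2 example_V ?lie {1, 2} = 3" "agent_weight 2 example_V ?lie {1, 3} = 2"
    unfolding owners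
    using example_edges_distinct by (simp_all add: example_w_def)
  have crossing: "{1::nat, 3} \<inter> {1, 2} \<noteq> {}" "{1::nat, 2} \<inter> {1, 3} \<noteq> {}"
    by auto
  have available_swapped: "available 2 example_EI (\<lambda>_. {}) = {{1, 3}, {1, 2}}"
    by (simp add: example_available insert_commute)
  \<comment> \<open>The simplifier rewrites \<open>1::nat\<close> to \<open>Suc 0\<close> before it could use \<open>weights\<close>, hence the
    \<open>unfold\<close> first.\<close>
  have "MI = {{1, 3}}"
    by (rule agent_choice_crossing_pair[OF available_swapped example_edges_distinct[symmetric]
          crossing(1) _ _ truthful]) (unfold weights, simp_all)
  moreover have "MI' = {{1, 2}}"
    by (rule agent_choice_crossing_pair[OF example_available example_edges_distinct
          crossing(2) _ _ misreported]) (unfold weights, simp_all)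
  ultimately show "utility example_V example_w 1 (\<lambda>_. {}) MI
           < utility example_V example_w 1 (\<lambda>_. {}) MI'"
    using example_edges_distinct
    by (simp add: utility_empty_profile_singleton example_V_def example_w_def)
qed

end
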